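(* Let $\bar x,\bar x'\in\bar{\mathcal X}$ with $\bar x\neq\bar x'$, and let $Q_{\bar x},Q_{\bar x'}$ be their orthogonal projections onto $\mathcal M$. Then with probability $1$, $Q_{\bar x}\neq Q_{\bar x'}$.
   Context: $\mathcal M\subset\mathbb R^d$ is an $m$-dimensional ($m<d$) smooth compact connected manifold without boundary with reach $R>0$; $\mu$ is a probability measure on $\mathcal M$ with a density with respect to volume; natural data are i.i.d. $\sim\mu$, and each augmented point $\bar x$ is generated from a natural point $x$ with law $(\varepsilon_{\rm p}\sqrt{2\pi})^{-d}\exp(-\|x-\bar x\|^2/(2\varepsilon_{\rm p}^2))$, where $\varepsilon_{\rm p}=\eta^{1/d}\varepsilon^{\tau+1}$ with $\tau,\eta>0$ and $0<\varepsilon\le\min\{1,R/2\}$. It is assumed that all augmented points lie in the tubular neighbourhood $\{x+h:x\in\mathcal M, h\perp T_x\mathcal M,\|h\|<\varepsilon^{\tau+1}\}$, so each has a unique nearest point (orthogonal projection) $Q_{\bar x}$ on $\mathcal M$. *)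

theory Defs
  imports "HOL-Analysis.Analysis" "HOL-Probability.Probability"
begin

fun iter_dderiv :: "'a::real_normed_vector list \<Rightarrow> ('a \<Rightarrow> 'b::real_normed_vector) \<Rightarrow> 'a \<Rightarrow> 'b" where
  "iter_dderiv [] f = f"
| "iter_dderiv (v # vs) f = (\<lambda>x. frechet_derivative (iter_dderiv vs f) (at x) v)"

definition smooth_on :: "'a::real_normed_vector set \<Rightarrow> ('a \<Rightarrow> 'b::real_normed_vector) \<Rightarrow> bool" where
  "smooth_on S f \<longleftrightarrow> (\<forall>vs. \<forall>x\<in>S. iter_dderiv vs f differentiable (at x))"

definition smooth_submanifold :: "('a::euclidean_space) set \<Rightarrow> nat \<Rightarrow> bool" where
  "smooth_submanifold M m \<longleftrightarrow>
     (\<forall>p\<in>M. \<exists>U V (\<phi>::'a \<Rightarrow> 'a) (\<psi>::'a \<Rightarrow> 'a) L.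
        open U \<and> p \<in> U \<and> open V \<and> subspace L \<and> dim L = m \<and>
        smooth_on U \<phi> \<and> smooth_on V \<psi> \<and>
        \<phi> ` U = V \<and> (\<forall>x\<in>U. \<psi> (\<phi> x) = x) \<and> (\<forall>y\<in>V. \<phi> (\<psi> y) = y) \<and>
        \<phi> ` (U \<inter> M) = V \<inter> L)"

definition tangent_space :: "('a::euclidean_space) set \<Rightarrow> 'a \<Rightarrow> 'a set" where
  "tangent_space M p = {v. \<exists>\<gamma>::real \<Rightarrow> 'a. \<gamma> 0 = p \<and> (\<forall>t. \<gamma> t \<in> M) \<and>
                                   (\<gamma> has_vector_derivative v) (at 0)}"

definition reach :: "('a::euclidean_space) set \<Rightarrow> real" where
  "reach M = Sup {r. r > 0 \<and> (\<forall>x. infdist x M < r \<longrightarrow> (\<exists>!p. p \<in> M \<and> dist x p = infdist x M))}"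

definition proj_onto :: "('a::euclidean_space) set \<Rightarrow> 'a \<Rightarrow> 'a" where
  "proj_onto M y = (THE p. p \<in> M \<and> dist y p = infdist y M)"

definition normal_tube :: "('a::euclidean_space) set \<Rightarrow> real \<Rightarrow> 'a set" where
  "normal_tube M r = {x + h | x h. x \<in> M \<and> (\<forall>v\<in>tangent_space M x. inner h v = 0) \<and> norm h < r}"

section \<open>m-dimensional Hausdorff measure (= Riemannian volume on an m-dim submanifold)\<close>

definition hausdorff_pre :: "nat \<Rightarrow> real \<Rightarrow> 'a::metric_space set \<Rightarrow> ennreal" where
  "hausdorff_pre m \<delta> A =
     (INF C \<in> {C :: nat \<Rightarrow> 'a set. A \<subseteq> (\<Union>i. C i) \<and> (\<forall>i. bounded (C i) \<and> diameter (C i) \<le> \<delta>)}.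
        (\<Sum>i. ennreal (unit_ball_vol (real m) * (diameter (C i) / 2) ^ m)))"

definition hausdorff_outer :: "nat \<Rightarrow> 'a::metric_space set \<Rightarrow> ennreal" where
  "hausdorff_outer m A = (SUP \<delta> \<in> {0<..}. hausdorff_pre m \<delta> A)"

definition hausdorff_measure :: "nat \<Rightarrow> ('a::metric_space) measure" where
  "hausdorff_measure m = measure_of UNIV (sets borel) (hausdorff_outer m)"

definition gauss_density :: "real \<Rightarrow> real^'d \<Rightarrow> real" where
  "gauss_density s z = (s * sqrt (2 * pi)) powi (- int CARD('d)) * exp (- (norm z)\<^sup>2 / (2 * s\<^sup>2))"

end

theory Submission
  imports Defs
begin

text \<open>
  Suppose \<open>y = X + Z\<close> and \<open>y' = X' + Z'\<close> have the same nearest point \<open>p\<close> on \<open>M\<close>. Then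
  \<open>y' - p\<close> is normal to \<open>M\<close> at \<open>p\<close>. Within the reach, \<open>p\<close> is determined by \<open>y\<close> alone, and \<open>M\<close>
  has a nonzero tangent vector \<open>v\<close> at \<open>p\<close>; so for fixed \<open>X\<close>, \<open>X'\<close>, \<open>Z\<close> the point \<open>y'\<close> must lie on
  the hyperplane \<open>{w. v \<bullet> w = v \<bullet> p}\<close>. This is a Lebesgue null set and \<open>Z'\<close> has a density and is
  independent of the rest, so by Fubini the event has probability zero.
  Uniqueness of nearest points within the reach needs the reach of a compact smooth submanifold
  to be positive. This follows from the estimate \<open>\<bar>n \<bullet> (q - p)\<bar> \<le> K * norm n * (norm (q - p))\<^sup>2\<close>
  for normal vectors \<open>n\<close> at \<open>p\<close>, a consequence of second-order expansions of the charts.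
\<close>

section \<open>Smooth maps\<close>

lemma smooth_on_imp_differentiable: "smooth_on S f \<Longrightarrow> x \<in> S \<Longrightarrow> f differentiable (at x)"
  unfolding smooth_on_def by (metis iter_dderiv.simps(1))

lemma smooth_on_imp_continuous_on: "smooth_on S f \<Longrightarrow> continuous_on S f"
  by (metis continuous_at_imp_continuous_on differentiable_imp_continuous_within
      smooth_on_imp_differentiable)

lemma iter_dderiv_append: "iter_dderiv vs (iter_dderiv ws f) = iter_dderiv (vs @ ws) f"
  by (induction vs) simp_all

lemma smooth_on_partial_derivative:
  assumes "smooth_on S f" shows "smooth_on S (\<lambda>x. frechet_derivative f (at x) v)"
proof -
  have "iter_dderiv vs (\<lambda>x. frechet_derivative f (at x) v) = iter_dderiv (vs @ [v]) f" for vs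
    using iter_dderiv_append[of vs "[v]" f] by simp
  then show ?thesis using assms unfolding smooth_on_def by simp
qed

lemma smooth_on_lipschitz:
  fixes f :: "'a::euclidean_space \<Rightarrow> 'b::real_normed_vector"
  assumes "smooth_on S f" "compact K" "convex K" "K \<subseteq> S"
  obtains C where "C-lipschitz_on K f"
proof -
  have "continuous_on K (\<lambda>x. frechet_derivative f (at x) i)" for i
    using smooth_on_imp_continuous_on[OF smooth_on_partial_derivative[OF assms(1)]] assms(4)
    by (rule continuous_on_subset)
  then have "bounded ((\<lambda>x. frechet_derivative f (at x) i) ` K)" for i
    using assms(2) by (intro compact_imp_bounded compact_continuous_image)
  then have "\<forall>i. \<exists>b>0. \<forall>x\<in>K. norm (frechet_derivative f (at x) i) \<le> b"
    unfolding bounded_pos by simp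
  then obtain B where B: "\<And>i. B i > 0" "\<And>i x. x \<in> K \<Longrightarrow> norm (frechet_derivative f (at x) i) \<le> B i"
    by metis
  have derivative: "(f has_derivative frechet_derivative f (at x)) (at x within K)" if "x \<in> K" for x
    using smooth_on_imp_differentiable[OF assms(1)] assms(4) that
    by (auto intro: has_derivative_at_withinI simp: frechet_derivative_works)
  have "onorm (frechet_derivative f (at x)) \<le> (\<Sum>i\<in>Basis. B i)" if "x \<in> K" for x
    using onorm_componentwise[OF has_derivative_bounded_linear[OF derivative[OF that]]] B(2)[OF that]
    by (meson order_trans sum_mono)
  then have "(\<Sum>i\<in>Basis. B i)-lipschitz_on K f"
    using differentiable_bound[OF assms(3) derivative]
    by (intro lipschitz_onI) (auto simp: dist_norm less_imp_le sum_nonneg B(1))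
  then show ?thesis ..
qed

lemma smooth_on_linearization_error:
  fixes f :: "'a::euclidean_space \<Rightarrow> 'b::real_normed_vector"
  assumes "smooth_on S f" "compact K" "convex K" "K \<subseteq> S"
  obtains C where "C \<ge> 0"
    "\<And>a b. a \<in> K \<Longrightarrow> b \<in> K \<Longrightarrow>
       norm (f b - f a - frechet_derivative f (at a) (b - a)) \<le> C * (norm (b - a))\<^sup>2"
proof -
  define Df where "Df x = frechet_derivative f (at x)" for x
  have "\<exists>c. c-lipschitz_on K (\<lambda>x. Df x i)" for i
    using smooth_on_lipschitz[OF smooth_on_partial_derivative[OF assms(1)] assms(2-4)]
    unfolding Df_def by blast
  then obtain L where L: "\<And>i. (L i)-lipschitz_on K (\<lambda>x. Df x i)"
    by metis
  define C where "C = (\<Sum>i\<in>Basis. L i)"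
  have derivative: "(f has_derivative Df x) (at x within T)" if "x \<in> K" for x T
    using smooth_on_imp_differentiable[OF assms(1)] assms(4) that unfolding Df_def
    by (auto intro: has_derivative_at_withinI simp: frechet_derivative_works)
  have "norm (f b - f a - Df a (b - a)) \<le> C * (norm (b - a))\<^sup>2" if a: "a \<in> K" and b: "b \<in> K" for a b
  proof -
    have segment: "closed_segment a b \<subseteq> K"
      using assms(3) a b by (simp add: closed_segment_subset)
    have "onorm (Df x - Df a) \<le> C * norm (b - a)" if x: "x \<in> closed_segment a b" for x
    proof -
      have xK: "x \<in> K" using x segment by blast
      have linear: "bounded_linear (Df x - Df a)"
        unfolding fun_diff_def
        using has_derivative_bounded_linear[OF derivative[OF xK]] has_derivative_bounded_linear[OF derivative[OF a]]
        by (rule bounded_linear_sub)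
      have "onorm (Df x - Df a) \<le> (\<Sum>i\<in>Basis. norm (Df x i - Df a i))"
        using onorm_componentwise[OF linear] by simp
      also have "\<dots> \<le> (\<Sum>i\<in>Basis. L i * norm (x - a))"
        by (intro sum_mono lipschitz_on_normD[OF L xK a])
      also have "\<dots> \<le> (\<Sum>i\<in>Basis. L i * norm (b - a))"
        using dist_in_closed_segment[OF x] lipschitz_on_nonneg[OF L]
        by (intro sum_mono mult_left_mono) (auto simp: dist_norm norm_minus_commute)
      finally show ?thesis by (simp add: C_def sum_distrib_right)
    qed
    moreover have "a + t *\<^sub>R (b - a) \<in> closed_segment a b" if "t \<in> {0..1}" for t
      using that by (auto simp: in_segment algebra_simps intro!: exI[of _ t])
    ultimately have "norm (f b - f a - Df a (b - a)) \<le> norm (b - a) * (C * norm (b - a))"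
      using segment derivative
      by (intro differentiable_bound_linearization[where S = "closed_segment a b"]) auto
    then show ?thesis by (simp add: power2_eq_square mult_ac)
  qed
  moreover have "C \<ge> 0" unfolding C_def using lipschitz_on_nonneg[OF L] by (simp add: sum_nonneg)
  ultimately show ?thesis using that unfolding Df_def by blast
qed

section \<open>Normal vectors and reach of a compact submanifold\<close>

definition normal_space :: "'a::euclidean_space set \<Rightarrow> 'a \<Rightarrow> 'a set" where
  "normal_space M p = {n. \<forall>v\<in>tangent_space M p. n \<bullet> v = 0}"

lemma nearest_point_normal:
  fixes M :: "'a::euclidean_space set"
  assumes "p \<in> M" "\<And>q. q \<in> M \<Longrightarrow> dist y p \<le> dist y q"
  shows "y - p \<in> normal_space M p"
  unfolding normal_space_def
proof safe
  fix v assume "v \<in> tangent_space M p"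
  then obtain \<gamma> where \<gamma>: "\<gamma> 0 = p" "\<And>t. \<gamma> t \<in> M" "(\<gamma> has_vector_derivative v) (at 0)"
    unfolding tangent_space_def by blast
  define g where "g t = (y - \<gamma> t) \<bullet> (y - \<gamma> t)" for t
  have "(g has_real_derivative - 2 * ((y - p) \<bullet> v)) (at 0)"
    using \<gamma>(3) unfolding g_def has_vector_derivative_def has_field_derivative_def
    by (auto intro!: derivative_eq_intros simp: \<gamma>(1) inner_commute algebra_simps)
  moreover have "\<forall>t. \<bar>0 - t\<bar> < 1 \<longrightarrow> g 0 \<le> g t"
    using assms(2)[OF \<gamma>(2)] unfolding g_def \<gamma>(1)
    by (simp add: dist_norm flip: power2_norm_eq_inner)
  ultimately have "- 2 * ((y - p) \<bullet> v) = 0"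
    using DERIV_local_min zero_less_one by blast
  then show "(y - p) \<bullet> v = 0" by simp
qed

lemma smooth_submanifold_chart:
  fixes M :: "'a::euclidean_space set"
  assumes "smooth_submanifold M m" "p \<in> M"
  obtains U V and \<phi> \<psi> :: "'a \<Rightarrow> 'a" and L where "open U" "p \<in> U" "open V" "subspace L" "dim L = m"
    "smooth_on U \<phi>" "smooth_on V \<psi>" "\<phi> ` U = V" "\<forall>x\<in>U. \<psi> (\<phi> x) = x" "\<forall>y\<in>V. \<phi> (\<psi> y) = y"
    "\<phi> ` (U \<inter> M) = V \<inter> L"
proof -
  have "\<exists>U V (\<phi>::'a \<Rightarrow> 'a) (\<psi>::'a \<Rightarrow> 'a) L.
      open U \<and> p \<in> U \<and> open V \<and> subspace L \<and> dim L = m \<and>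
      smooth_on U \<phi> \<and> smooth_on V \<psi> \<and>
      \<phi> ` U = V \<and> (\<forall>x\<in>U. \<psi> (\<phi> x) = x) \<and> (\<forall>y\<in>V. \<phi> (\<psi> y) = y) \<and>
      \<phi> ` (U \<inter> M) = V \<inter> L"
    using assms unfolding smooth_submanifold_def by (rule bspec)
  then show ?thesis using that by (elim exE conjE)
qed

lemma chart_inverse_in_submanifold:
  assumes "\<phi> ` (U \<inter> M) = V \<inter> L" "\<forall>x\<in>U. \<psi> (\<phi> x) = x" "b \<in> V" "b \<in> L"
  shows "\<psi> b \<in> M"
proof -
  obtain x where "x \<in> U \<inter> M" "b = \<phi> x" using assms(1,3,4) by (metis IntI imageE)
  then show ?thesis using assms(2) by auto
qed

lemma derivative_in_tangent_space:
  fixes \<psi> :: "'a::real_normed_vector \<Rightarrow> 'b::euclidean_space"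
  assumes "open V" "subspace L" "a \<in> V" "a \<in> L" "l \<in> L" "\<psi> differentiable (at a)"
    and into_M: "\<And>b. b \<in> V \<Longrightarrow> b \<in> L \<Longrightarrow> \<psi> b \<in> M"
  shows "frechet_derivative \<psi> (at a) l \<in> tangent_space M (\<psi> a)"
proof -
  obtain e where e: "e > 0" "ball a e \<subseteq> V" using assms(1,3) open_contains_ball by blast
  define c where "c = e / (norm l + 1)"
  have "norm l + 1 > 0" by (simp add: add_nonneg_pos)
  then have c: "c > 0" "c * norm l < e"
    using e(1) by (simp_all add: c_def field_simps)
  \<comment> \<open>\<open>tangent_space\<close> asks for curves defined on all of \<open>\<real>\<close>, hence the bounded
    reparametrisation of the line through \<open>a\<close> in direction \<open>l\<close>\<close>
  define \<gamma> where "\<gamma> t = a + (c * sin (t / c)) *\<^sub>R l" for t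
  have "(\<gamma> has_vector_derivative (c * (cos (0 / c) * (1 / c))) *\<^sub>R l) (at 0)"
    unfolding \<gamma>_def by (auto intro!: derivative_eq_intros)
  then have "(\<gamma> has_vector_derivative l) (at 0)" using c(1) by simp
  moreover have "(\<psi> has_derivative frechet_derivative \<psi> (at a)) (at (\<gamma> 0) within range \<gamma>)"
    using assms(6) by (simp add: \<gamma>_def frechet_derivative_works has_derivative_at_withinI)
  ultimately have "((\<psi> \<circ> \<gamma>) has_vector_derivative frechet_derivative \<psi> (at a) l) (at 0)"
    by (rule vector_derivative_diff_chain_within)
  moreover have "\<gamma> t \<in> V" "\<gamma> t \<in> L" for t
  proof -
    have "norm ((c * sin (t / c)) *\<^sub>R l) \<le> c * norm l"
      using c(1) abs_sin_le_one[of "t / c"] by (simp add: abs_mult mult_left_le_one_le)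
    then show "\<gamma> t \<in> V" using c(2) e(2) by (auto simp: \<gamma>_def dist_norm)
    show "\<gamma> t \<in> L" unfolding \<gamma>_def using assms(2,4,5) by (simp add: subspace_add subspace_scale)
  qed
  ultimately show ?thesis
    unfolding tangent_space_def using into_M by (auto simp: \<gamma>_def intro!: exI[of _ "\<psi> \<circ> \<gamma>"])
qed

lemma tangent_space_nontrivial:
  fixes M :: "'a::euclidean_space set"
  assumes "smooth_submanifold M m" "1 \<le> m" "p \<in> M"
  obtains v where "v \<noteq> 0" "v \<in> tangent_space M p"
proof -
  obtain U V and \<phi> \<psi> :: "'a \<Rightarrow> 'a" and L where chart: "open U" "p \<in> U" "open V" "subspace L"
    "dim L = m" "smooth_on U \<phi>" "smooth_on V \<psi>" "\<phi> ` U = V" "\<forall>x\<in>U. \<psi> (\<phi> x) = x"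
    "\<forall>y\<in>V. \<phi> (\<psi> y) = y" "\<phi> ` (U \<inter> M) = V \<inter> L"
    using smooth_submanifold_chart[OF assms(1,3)] .
  define a where "a = \<phi> p"
  have a: "a \<in> V" "a \<in> L" "\<psi> a = p" using chart(2,9,11) assms(3) unfolding a_def by auto
  obtain l where l: "l \<in> L" "l \<noteq> 0"
    using chart(5) assms(2) dim_eq_0[of L] by fastforce
  define D\<psi> where "D\<psi> = frechet_derivative \<psi> (at a)"
  define D\<phi> where "D\<phi> = frechet_derivative \<phi> (at p)"
  have \<psi>: "(\<psi> has_derivative D\<psi>) (at a)"
    using smooth_on_imp_differentiable[OF chart(7) a(1)] by (simp add: D\<psi>_def frechet_derivative_works)
  have \<phi>: "(\<phi> has_derivative D\<phi>) (at (\<psi> a))"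
    using smooth_on_imp_differentiable[OF chart(6) chart(2)] a(3) by (simp add: D\<phi>_def frechet_derivative_works)
  \<comment> \<open>\<open>\<phi> \<circ> \<psi>\<close> is the identity near \<open>a\<close>, so \<open>D\<psi>\<close> is injective\<close>
  have "((\<phi> \<circ> \<psi>) has_derivative id) (at a)"
    by (rule has_derivative_transform_within_open[OF has_derivative_id chart(3)]) (use a chart(10) in auto)
  then have "D\<phi> \<circ> D\<psi> = id" using has_derivative_unique[OF diff_chain_at[OF \<psi> \<phi>]] by simp
  then have "D\<psi> l \<noteq> 0"
    using l(2) linear_0[OF has_derivative_linear[OF \<phi>]] by (metis comp_apply id_apply)
  moreover have "D\<psi> l \<in> tangent_space M p"
    using derivative_in_tangent_space[OF chart(3,4) a(1,2) l(1) smooth_on_imp_differentiable[OF chart(7) a(1)]]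
      chart_inverse_in_submanifold[OF chart(11,9)] a(3) unfolding D\<psi>_def by metis
  ultimately show ?thesis using that by blast
qed

lemma submanifold_normal_bound_local:
  fixes M :: "'a::euclidean_space set"
  assumes "smooth_submanifold M m" "p \<in> M"
  shows "\<exists>\<delta>>0. \<exists>K\<ge>0. \<forall>p' q n. p' \<in> M \<inter> ball p \<delta> \<longrightarrow> q \<in> M \<inter> ball p \<delta> \<longrightarrow>
           n \<in> normal_space M p' \<longrightarrow> \<bar>n \<bullet> (q - p')\<bar> \<le> K * norm n * (norm (q - p'))\<^sup>2"
proof -
  obtain U V and \<phi> \<psi> :: "'a \<Rightarrow> 'a" and L where chart: "open U" "p \<in> U" "open V" "subspace L"
    "dim L = m" "smooth_on U \<phi>" "smooth_on V \<psi>" "\<phi> ` U = V" "\<forall>x\<in>U. \<psi> (\<phi> x) = x"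
    "\<forall>y\<in>V. \<phi> (\<psi> y) = y" "\<phi> ` (U \<inter> M) = V \<inter> L"
    using smooth_submanifold_chart[OF assms] .
  obtain r where r: "r > 0" "cball (\<phi> p) r \<subseteq> V"
    using chart(2,3,8) open_contains_cball by blast
  obtain C where C: "C \<ge> 0" "\<And>a b. a \<in> cball (\<phi> p) r \<Longrightarrow> b \<in> cball (\<phi> p) r \<Longrightarrow>
      norm (\<psi> b - \<psi> a - frechet_derivative \<psi> (at a) (b - a)) \<le> C * (norm (b - a))\<^sup>2"
    using smooth_on_linearization_error[OF chart(7) compact_cball convex_cball r(2)] by blast
  have "open (U \<inter> \<phi> -` ball (\<phi> p) r)"
    using continuous_open_preimage[OF smooth_on_imp_continuous_on[OF chart(6)] chart(1)] by simp
  then obtain \<delta> where \<delta>: "\<delta> > 0" "cball p \<delta> \<subseteq> U \<inter> \<phi> -` ball (\<phi> p) r"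
    using chart(2) r(1) open_contains_cball by (metis IntI centre_in_ball vimageI2)
  obtain Lip where Lip: "Lip-lipschitz_on (cball p \<delta>) \<phi>"
    using smooth_on_lipschitz[OF chart(6) compact_cball convex_cball] \<delta>(2) by blast
  have "\<bar>n \<bullet> (q - p')\<bar> \<le> (C * Lip\<^sup>2) * norm n * (norm (q - p'))\<^sup>2"
    if p': "p' \<in> M \<inter> ball p \<delta>" and q: "q \<in> M \<inter> ball p \<delta>" and n: "n \<in> normal_space M p'" for p' q n
  proof -
    have p'q: "p' \<in> cball p \<delta>" "q \<in> cball p \<delta>"
      using p' q by auto
    then have chart_domain: "p' \<in> U" "q \<in> U" "\<phi> p' \<in> ball (\<phi> p) r" "\<phi> q \<in> ball (\<phi> p) r"
      using \<delta>(2) by auto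
    define a b where "a = \<phi> p'" and "b = \<phi> q"
    have ab: "a \<in> V \<inter> L" "b \<in> V \<inter> L" "a \<in> cball (\<phi> p) r" "b \<in> cball (\<phi> p) r" "\<psi> a = p'" "\<psi> b = q"
      using p' q chart_domain chart(9,11) unfolding a_def b_def by auto
    have "frechet_derivative \<psi> (at a) (b - a) \<in> tangent_space M p'"
      using derivative_in_tangent_space[of V L a "b - a" \<psi> M] chart(3,4) ab
        smooth_on_imp_differentiable[OF chart(7)] chart_inverse_in_submanifold[OF chart(11,9)]
      by (auto simp: subspace_diff)
    then have tangent: "n \<bullet> frechet_derivative \<psi> (at a) (b - a) = 0"
      using n unfolding normal_space_def by blast
    have "\<bar>n \<bullet> (q - p')\<bar> = \<bar>n \<bullet> (\<psi> b - \<psi> a - frechet_derivative \<psi> (at a) (b - a))\<bar>"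
      using tangent ab(5,6) by (simp add: inner_diff_right)
    also have "\<dots> \<le> norm n * (C * (norm (b - a))\<^sup>2)"
      using Cauchy_Schwarz_ineq2 C(2)[OF ab(3,4)] by (metis mult_left_mono norm_ge_zero order_trans)
    also have "\<dots> \<le> norm n * (C * (Lip * norm (q - p'))\<^sup>2)"
      using lipschitz_on_normD[OF Lip p'q(2,1)] C(1) unfolding a_def b_def
      by (intro mult_left_mono power_mono) auto
    finally show ?thesis by (simp add: power_mult_distrib mult_ac)
  qed
  moreover have "C * Lip\<^sup>2 \<ge> 0" using C(1) by simp
  ultimately show ?thesis using \<delta>(1) by blast
qed

lemma submanifold_normal_bound:
  fixes M :: "'a::euclidean_space set"
  assumes "smooth_submanifold M m" "compact M"
  obtains K where "K \<ge> 0"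
    "\<And>p q n. p \<in> M \<Longrightarrow> q \<in> M \<Longrightarrow> n \<in> normal_space M p \<Longrightarrow>
       \<bar>n \<bullet> (q - p)\<bar> \<le> K * norm n * (norm (q - p))\<^sup>2"
proof -
  have "\<forall>p\<in>M. \<exists>\<delta>>0. \<exists>K\<ge>0. \<forall>p' q n. p' \<in> M \<inter> ball p \<delta> \<longrightarrow> q \<in> M \<inter> ball p \<delta> \<longrightarrow>
      n \<in> normal_space M p' \<longrightarrow> \<bar>n \<bullet> (q - p')\<bar> \<le> K * norm n * (norm (q - p'))\<^sup>2"
    using submanifold_normal_bound_local[OF assms(1)] by blast
  then obtain \<delta> K where local: "\<And>p. p \<in> M \<Longrightarrow> \<delta> p > 0" "\<And>p. p \<in> M \<Longrightarrow> K p \<ge> 0"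
    "\<And>p p' q n. p \<in> M \<Longrightarrow> p' \<in> M \<inter> ball p (\<delta> p) \<Longrightarrow> q \<in> M \<inter> ball p (\<delta> p) \<Longrightarrow>
       n \<in> normal_space M p' \<Longrightarrow> \<bar>n \<bullet> (q - p')\<bar> \<le> K p * norm n * (norm (q - p'))\<^sup>2"
    by metis
  have "M \<subseteq> (\<Union>p\<in>M. ball p (\<delta> p))" using local(1) centre_in_ball by blast
  then obtain F where F: "F \<subseteq> M" "finite F" "M \<subseteq> (\<Union>p\<in>F. ball p (\<delta> p))"
    by (rule compactE_image[OF assms(2) open_ball])
  obtain e where e: "e > 0" "\<And>x. x \<in> M \<Longrightarrow> \<exists>p\<in>F. ball x e \<subseteq> ball p (\<delta> p)"
    by (rule Heine_Borel_lemma[OF assms(2), of "(\<lambda>p. ball p (\<delta> p)) ` F"]) (use F(3) in auto)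
  \<comment> \<open>the local constants cover pairs closer than the Lebesgue number \<open>e\<close>; for distant pairs,
    \<open>\<bar>n \<bullet> (q - p)\<bar> \<le> norm n * norm (q - p) \<le> norm n * (norm (q - p))\<^sup>2 / e\<close>\<close>
  define K' where "K' = (\<Sum>p\<in>F. K p) + 1 / e"
  have "(\<Sum>p\<in>F. K p) \<ge> 0" using local(2) F(1) by (meson subsetD sum_nonneg)
  then have K'_bounds: "1 / e \<le> K'" "K' \<ge> 0" unfolding K'_def using e(1) by simp_all
  have K_le: "K p \<le> K'" if "p \<in> F" for p
  proof -
    have "K p \<le> (\<Sum>p\<in>F. K p)" using member_le_sum[of p F K] that F(1,2) local(2) by blast
    moreover have "0 \<le> 1 / e" using e(1) by simp
    ultimately show ?thesis unfolding K'_def by linarith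
  qed
  have "\<bar>n \<bullet> (q - p)\<bar> \<le> K' * norm n * (norm (q - p))\<^sup>2"
    if p: "p \<in> M" and q: "q \<in> M" and n: "n \<in> normal_space M p" for p q n
  proof (cases "norm (q - p) < e")
    case True
    obtain p0 where "p0 \<in> F" "ball p e \<subseteq> ball p0 (\<delta> p0)" using e(2)[OF p] by blast
    moreover have "p \<in> ball p e" "q \<in> ball p e"
      using e(1) True by (auto simp: dist_norm norm_minus_commute)
    ultimately have "\<bar>n \<bullet> (q - p)\<bar> \<le> K p0 * norm n * (norm (q - p))\<^sup>2"
      using local(3)[of p0 p q n] p q n F(1) by blast
    also have "\<dots> \<le> K' * norm n * (norm (q - p))\<^sup>2"
      using K_le[OF \<open>p0 \<in> F\<close>] by (intro mult_right_mono) auto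
    finally show ?thesis .
  next
    case False
    have "\<bar>n \<bullet> (q - p)\<bar> \<le> norm n * norm (q - p)" by (rule Cauchy_Schwarz_ineq2)
    also have "\<dots> \<le> norm n * ((1 / e) * (norm (q - p))\<^sup>2)"
      using False e(1) mult_right_mono[of e "norm (q - p)" "norm (q - p)"]
      by (intro mult_left_mono) (auto simp: power2_eq_square field_simps)
    also have "\<dots> \<le> norm n * (K' * (norm (q - p))\<^sup>2)"
      using K'_bounds(1) by (intro mult_left_mono mult_right_mono) auto
    finally show ?thesis by (simp add: mult_ac)
  qed
  then show ?thesis using that K'_bounds(2) by blast
qed

lemma submanifold_positive_reach:
  fixes M :: "'a::euclidean_space set"
  assumes "smooth_submanifold M m" "compact M" "M \<noteq> {}"
  obtains r where "r > 0" "\<And>x. infdist x M < r \<Longrightarrow> \<exists>!p. p \<in> M \<and> dist x p = infdist x M"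
proof -
  obtain K where K: "K \<ge> 0" "\<And>p q n. p \<in> M \<Longrightarrow> q \<in> M \<Longrightarrow> n \<in> normal_space M p \<Longrightarrow>
      \<bar>n \<bullet> (q - p)\<bar> \<le> K * norm n * (norm (q - p))\<^sup>2"
    using submanifold_normal_bound[OF assms(1,2)] by blast
  define r where "r = 1 / (2 * K + 1)"
  have r: "r > 0" "2 * K * r < 1" unfolding r_def using K(1) by (simp_all add: field_simps)
  have "p = q" if x: "infdist x M < r" and p: "p \<in> M" "dist x p = infdist x M"
    and q: "q \<in> M" "dist x q = infdist x M" for x p q
  proof (rule ccontr)
    assume "p \<noteq> q"
    then have pos: "(norm (q - p))\<^sup>2 > 0" by simp
    have "x - p \<in> normal_space M p"
      using nearest_point_normal[OF p(1)] p(2) infdist_le by metis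
    then have normal: "\<bar>(x - p) \<bullet> (q - p)\<bar> \<le> K * norm (x - p) * (norm (q - p))\<^sup>2"
      using K(2)[OF p(1) q(1)] by blast
    have "(norm (x - q))\<^sup>2 = (norm (x - p))\<^sup>2 - 2 * ((x - p) \<bullet> (q - p)) + (norm (q - p))\<^sup>2"
      by (simp add: power2_norm_eq_inner algebra_simps inner_commute)
    moreover have "norm (x - q) = norm (x - p)" using p(2) q(2) by (simp add: dist_norm)
    ultimately have "(norm (q - p))\<^sup>2 = 2 * ((x - p) \<bullet> (q - p))" by simp
    then have "(norm (q - p))\<^sup>2 \<le> 2 * (K * norm (x - p) * (norm (q - p))\<^sup>2)"
      using normal abs_ge_self[of "(x - p) \<bullet> (q - p)"] by linarith
    also have "\<dots> \<le> (2 * K * r) * (norm (q - p))\<^sup>2"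
      using x p(2) K(1) pos by (simp add: dist_norm mult_right_mono mult_left_mono mult.assoc)
    also have "\<dots> < (norm (q - p))\<^sup>2" using r(2) pos by simp
    finally show False by simp
  qed
  moreover have "\<exists>p. p \<in> M \<and> dist x p = infdist x M" for x
    using infdist_attains_inf[OF compact_imp_closed[OF assms(2)] assms(3)] by metis
  ultimately have "\<exists>!p. p \<in> M \<and> dist x p = infdist x M" if "infdist x M < r" for x
    using that by (metis (no_types, lifting))
  then show ?thesis by (rule that[OF r(1)])
qed

lemma unique_nearest_point_within_reach:
  fixes M :: "'a::euclidean_space set"
  assumes "smooth_submanifold M m" "compact M" "M \<noteq> {}" "infdist y M < reach M"
  shows "\<exists>!p. p \<in> M \<and> dist y p = infdist y M"
proof -
  define S where "S = {r. r > 0 \<and> (\<forall>x. infdist x M < r \<longrightarrow> (\<exists>!p. p \<in> M \<and> dist x p = infdist x M))}"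
  obtain r0 where "r0 > 0" "\<And>x. infdist x M < r0 \<Longrightarrow> \<exists>!p. p \<in> M \<and> dist x p = infdist x M"
    using submanifold_positive_reach[OF assms(1-3)] by blast
  \<comment> \<open>\<open>Sup\<close> on \<open>real\<close> is unspecified for empty or unbounded sets: positive reach excludes
    the first case, and in the second every radius is admissible\<close>
  then have "S \<noteq> {}" unfolding S_def by auto
  moreover have "reach M = Sup S" unfolding reach_def S_def ..
  ultimately have "\<exists>r\<in>S. infdist y M < r"
  proof (cases "bdd_above S")
    case True
    then show ?thesis using less_cSup_iff[OF \<open>S \<noteq> {}\<close> True] assms(4) \<open>reach M = Sup S\<close> by simp
  next
    case False
    then show ?thesis unfolding bdd_above_def by (meson not_le)
  qed
  then obtain r where "r \<in> S" "infdist y M < r" by blast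
  then show ?thesis unfolding S_def by simp
qed

lemma infdist_less_normal_tube:
  fixes M :: "'a::euclidean_space set"
  assumes "y \<in> normal_tube M r"
  shows "infdist y M < r"
proof -
  obtain x h where "y = x + h" "x \<in> M" "norm h < r" using assms unfolding normal_tube_def by blast
  then show ?thesis using infdist_le[of x M y] by (simp add: dist_norm)
qed

lemma proj_onto_within_reach:
  fixes M :: "'a::euclidean_space set"
  assumes "smooth_submanifold M m" "compact M" "M \<noteq> {}" "infdist y M < reach M"
  shows "proj_onto M y \<in> M" "dist y (proj_onto M y) = infdist y M"
  using theI'[OF unique_nearest_point_within_reach[OF assms]] unfolding proj_onto_def by auto

section \<open>Independent noise with a density\<close>

lemma sets_borel_Collect_continuous_notin:
  assumes "continuous_on UNIV f" "E \<in> sets borel"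
  shows "{x \<in> space borel. f x \<notin> E} \<in> sets borel"
proof -
  have "{x \<in> space borel. f x \<notin> E} = space borel - (f -` E \<inter> space borel)" by auto
  then show ?thesis
    using measurable_sets[OF borel_measurable_continuous_onI[OF assms(1)] assms(2)] by auto
qed

lemma (in prob_space) distributed_AE_not_in_null_set:
  assumes "distributed M lborel Z g" "N \<in> null_sets lborel"
  shows "AE z in distr M borel Z. z \<notin> N"
proof -
  have density: "distr M borel Z = density lborel g"
    using assms(1) unfolding distributed_def by (metis distr_cong sets_lborel)
  have "AE z in lborel. 0 < g z \<longrightarrow> z \<notin> N"
    using AE_not_in[OF assms(2)] by eventually_elim simp
  then show ?thesis
    unfolding density using AE_density[OF distributed_borel_measurable[OF assms(1)]] by blast
qed

lemma (in prob_space) AE_indep_var_Pair: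
  assumes "indep_var S U T V" "{x \<in> space (S \<Otimes>\<^sub>M T). Q x} \<in> sets (S \<Otimes>\<^sub>M T)"
    and "AE u in distr M S U. AE v in distr M T V. Q (u, v)"
  shows "AE \<omega> in M. Q (U \<omega>, V \<omega>)"
proof -
  have U: "random_variable S U" and V: "random_variable T V"
    and joint: "distr M S U \<Otimes>\<^sub>M distr M T V = distr M (S \<Otimes>\<^sub>M T) (\<lambda>\<omega>. (U \<omega>, V \<omega>))"
    using assms(1) unfolding indep_var_distribution_eq by auto
  interpret pair_sigma_finite "distr M S U" "distr M T V"
    using U V by (intro pair_sigma_finite.intro prob_space_imp_sigma_finite prob_space_distr)
  have "AE x in distr M S U \<Otimes>\<^sub>M distr M T V. Q x"
    using assms(2,3) by (intro AE_pair_measure) (simp_all add: space_pair_measure)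
  then show ?thesis
    unfolding joint using assms(2) by (subst (asm) AE_distr_iff) (auto intro: measurable_Pair U V)
qed

lemma (in prob_space) AE_indep_translate_avoids_null_sections:
  fixes Z Z' :: "'a \<Rightarrow> 'b::euclidean_space"
  assumes "indep_var borel Z borel Z'" "distributed M lborel Z' g"
    and "E \<in> sets borel" "\<And>y. {y'. (y, y') \<in> E} \<in> null_sets lborel"
  shows "AE \<omega> in M. (x + Z \<omega>, x' + Z' \<omega>) \<notin> E"
proof -
  have "AE z in distr M borel Z. AE z' in distr M borel Z'. (x + z, x' + z') \<notin> E"
  proof (rule AE_I2)
    fix z
    have "{z'. z' - (- x') \<in> {y'. (x + z, y') \<in> E}} \<in> null_sets lborel"
      by (rule null_sets_translation[OF assms(4)])
    from distributed_AE_not_in_null_set[OF assms(2) this]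
    show "AE z' in distr M borel Z'. (x + z, x' + z') \<notin> E"
      by eventually_elim (simp add: add.commute)
  qed
  moreover have "{w \<in> space (borel \<Otimes>\<^sub>M borel). (x + fst w, x' + snd w) \<notin> E} \<in> sets (borel \<Otimes>\<^sub>M borel)"
    unfolding borel_prod by (intro sets_borel_Collect_continuous_notin assms(3) continuous_intros)
  ultimately show ?thesis
    using AE_indep_var_Pair[OF assms(1), of "\<lambda>w. (x + fst w, x' + snd w) \<notin> E"] by simp
qed

lemma (in prob_space) AE_indep_noise_avoids_null_sections:
  fixes X X' Z Z' :: "'a \<Rightarrow> 'b::euclidean_space"
  assumes indep: "indep_var borel Z borel Z'"
      "indep_var borel (\<lambda>\<omega>. (Z \<omega>, Z' \<omega>)) borel (\<lambda>\<omega>. (X \<omega>, X' \<omega>))"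
    and "distributed M lborel Z' g"
    and E: "E \<in> sets borel" "\<And>y. {y'. (y, y') \<in> E} \<in> null_sets lborel"
  shows "AE \<omega> in M. (X \<omega> + Z \<omega>, X' \<omega> + Z' \<omega>) \<notin> E"
proof -
  define Q where "Q zz xx \<longleftrightarrow> (fst xx + fst zz, snd xx + snd zz) \<notin> E" for zz xx :: "'b \<times> 'b"
  define ZZ where "ZZ = distr M borel (\<lambda>\<omega>. (Z \<omega>, Z' \<omega>))"
  define XX where "XX = distr M borel (\<lambda>\<omega>. (X \<omega>, X' \<omega>))"
  have rv: "random_variable borel (\<lambda>\<omega>. (Z \<omega>, Z' \<omega>))" "random_variable borel (\<lambda>\<omega>. (X \<omega>, X' \<omega>))"
    using indep(2) by (auto dest: indep_var_rv1 indep_var_rv2)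
  have Q_sets: "{w \<in> space (borel \<Otimes>\<^sub>M borel). Q (fst w) (snd w)} \<in> sets (borel \<Otimes>\<^sub>M borel)"
    unfolding Q_def borel_prod by (intro sets_borel_Collect_continuous_notin E continuous_intros)
  have "{zz \<in> space borel. Q zz xx} \<in> sets borel" for xx
    unfolding Q_def by (intro sets_borel_Collect_continuous_notin E continuous_intros)
  then have "AE zz in ZZ. Q zz xx" for xx
    using AE_indep_translate_avoids_null_sections[OF indep(1) assms(3) E, of "fst xx" "snd xx"]
    unfolding ZZ_def by (subst AE_distr_iff[OF rv(1)]) (simp_all add: Q_def)
  then have "AE zz in ZZ. AE xx in XX. Q zz xx"
    using rv Q_sets unfolding ZZ_def XX_def
    by (subst pair_sigma_finite.AE_commute)
       (auto intro!: pair_sigma_finite.intro prob_space_imp_sigma_finite prob_space_distr simp: space_pair_measure)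
  then have "AE \<omega> in M. Q (Z \<omega>, Z' \<omega>) (X \<omega>, X' \<omega>)"
    using AE_indep_var_Pair[OF indep(2), of "\<lambda>w. Q (fst w) (snd w)"] Q_sets unfolding ZZ_def XX_def by simp
  then show ?thesis by (simp add: Q_def)
qed

section \<open>Pairs of points with a common nearest point\<close>

lemma hyperplane_null_sets_lborel:
  fixes v :: "'a::euclidean_space"
  assumes "v \<noteq> 0"
  shows "{z. v \<bullet> z = c} \<in> null_sets lborel"
proof -
  have "{z. v \<bullet> z = c} \<in> null_sets lebesgue"
    using negligible_hyperplane[of v c] assms by (simp add: negligible_iff_null_sets)
  moreover have "{z. v \<bullet> z = c} \<in> sets lborel" using closed_hyperplane by simp
  ultimately show ?thesis using null_sets_completion_iff by blast
qed

definition shared_nearest_point_pairs :: "'a::euclidean_space set \<Rightarrow> ('a \<times> 'a) set" where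
  "shared_nearest_point_pairs M = {(y, y'). infdist y M < reach M \<and>
     (\<exists>p\<in>M. dist y p = infdist y M \<and> dist y' p = infdist y' M)}"

lemma shared_nearest_point_pairs_borel:
  fixes M :: "'a::euclidean_space set"
  assumes "compact M"
  shows "shared_nearest_point_pairs M \<in> sets borel"
proof -
  define T :: "('a \<times> 'a \<times> 'a) set"
    where "T = {(p, y, y'). dist y p = infdist y M \<and> dist y' p = infdist y' M}"
  have "closed T" unfolding T_def case_prod_unfold
    by (intro closed_Collect_conj closed_Collect_eq continuous_intros)
  then have "closed {z. \<exists>p. p \<in> M \<and> (p, z) \<in> T}"
    by (rule closed_compact_projection[OF assms])
  moreover have "open {z :: 'a \<times> 'a. infdist (fst z) M < reach M}"
    by (intro open_Collect_less continuous_intros)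
  moreover have "shared_nearest_point_pairs M
      = {z. infdist (fst z) M < reach M} \<inter> {z. \<exists>p. p \<in> M \<and> (p, z) \<in> T}"
    unfolding shared_nearest_point_pairs_def T_def by auto
  ultimately show ?thesis by simp
qed

lemma shared_nearest_point_pairs_null_sections:
  fixes M :: "'a::euclidean_space set"
  assumes "smooth_submanifold M m" "1 \<le> m" "compact M" "M \<noteq> {}"
  shows "{y'. (y, y') \<in> shared_nearest_point_pairs M} \<in> null_sets lborel"
proof (cases "infdist y M < reach M")
  case True
  then obtain p where p: "p \<in> M" "dist y p = infdist y M"
    and unique: "\<And>p'. p' \<in> M \<Longrightarrow> dist y p' = infdist y M \<Longrightarrow> p' = p"
    using unique_nearest_point_within_reach[OF assms(1,3,4)] by metis
  obtain v where v: "v \<noteq> 0" "v \<in> tangent_space M p"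
    using tangent_space_nontrivial[OF assms(1,2) p(1)] .
  have "{y'. (y, y') \<in> shared_nearest_point_pairs M} \<subseteq> {y'. v \<bullet> y' = v \<bullet> p}"
  proof safe
    fix y' assume "(y, y') \<in> shared_nearest_point_pairs M"
    then have "dist y' p = infdist y' M"
      unfolding shared_nearest_point_pairs_def using unique by auto
    then have "y' - p \<in> normal_space M p"
      using nearest_point_normal[OF p(1)] infdist_le by metis
    then have "v \<bullet> (y' - p) = 0"
      using v(2) unfolding normal_space_def by (simp add: inner_commute)
    then show "v \<bullet> y' = v \<bullet> p" by (simp add: inner_diff_right)
  qed
  moreover have "(\<lambda>y'. (y, y')) \<in> borel_measurable borel"
    by (intro borel_measurable_continuous_onI continuous_intros)
  from measurable_sets[OF this shared_nearest_point_pairs_borel[OF assms(3)]]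
  have "{y'. (y, y') \<in> shared_nearest_point_pairs M} \<in> sets lborel" by (simp add: vimage_def)
  ultimately show ?thesis using hyperplane_null_sets_lborel[OF v(1)] null_sets_subset by blast
next
  case False
  then show ?thesis unfolding shared_nearest_point_pairs_def by simp
qed

theorem lemma3p1:
  fixes M :: "(real^'d) set" and m :: nat and R \<epsilon> \<tau> \<eta> :: real
    and \<mu> :: "(real^'d) measure" and f :: "real^'d \<Rightarrow> ennreal"
    and P :: "'w measure" and X X' Z Z' :: "'w \<Rightarrow> real^'d"
  assumes manifold: "smooth_submanifold M m" "compact M" "connected M" "M \<noteq> {}"
    and dims: "1 \<le> m" "m < CARD('d)"
    and reach: "reach M = R" "R > 0"
    and params: "\<tau> > 0" "\<eta> > 0" "0 < \<epsilon>" "\<epsilon> \<le> min 1 (R / 2)"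
    and mu: "prob_space \<mu>" "f \<in> borel_measurable borel"
            "\<mu> = density (hausdorff_measure m) (\<lambda>x. f x * indicator M x)"
    and P: "prob_space P"
    and rv: "X \<in> borel_measurable P" "X' \<in> borel_measurable P"
            "Z \<in> borel_measurable P" "Z' \<in> borel_measurable P"
    and natural: "distr P borel X = \<mu>" "distr P borel X' = \<mu>"
    and same_or_indep: "(\<forall>\<omega>\<in>space P. X' \<omega> = X \<omega>) \<or> prob_space.indep_var P borel X borel X'"
    and noise: "distributed P lborel Z (\<lambda>z. ennreal (gauss_density (\<eta> powr (1 / real CARD('d)) * \<epsilon> powr (\<tau> + 1)) z))"
               "distributed P lborel Z' (\<lambda>z. ennreal (gauss_density (\<eta> powr (1 / real CARD('d)) * \<epsilon> powr (\<tau> + 1)) z))"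
    and indep: "prob_space.indep_var P borel Z borel Z'"
               "prob_space.indep_var P borel (\<lambda>\<omega>. (Z \<omega>, Z' \<omega>)) borel (\<lambda>\<omega>. (X \<omega>, X' \<omega>))"
  shows "AE \<omega> in P.
           (X \<omega> + Z \<omega> \<in> normal_tube M (\<epsilon> powr (\<tau> + 1)) \<and>
            X' \<omega> + Z' \<omega> \<in> normal_tube M (\<epsilon> powr (\<tau> + 1)) \<and>
            X \<omega> + Z \<omega> \<noteq> X' \<omega> + Z' \<omega>)
           \<longrightarrow> proj_onto M (X \<omega> + Z \<omega>) \<noteq> proj_onto M (X' \<omega> + Z' \<omega>)"
proof -
  have "\<epsilon> powr (\<tau> + 1) \<le> \<epsilon>" using params by (intro powr_le_one_le) auto
  then have tube_within_reach: "infdist y M < reach M" if "y \<in> normal_tube M (\<epsilon> powr (\<tau> + 1))" for y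
    using infdist_less_normal_tube[OF that] params(4) reach by auto
  have "AE \<omega> in P. (X \<omega> + Z \<omega>, X' \<omega> + Z' \<omega>) \<notin> shared_nearest_point_pairs M"
    using shared_nearest_point_pairs_borel[OF manifold(2)]
      shared_nearest_point_pairs_null_sections[OF manifold(1) dims(1) manifold(2,4)]
    by (rule prob_space.AE_indep_noise_avoids_null_sections[OF P indep noise(2)])
  then show ?thesis
  proof eventually_elim
    case (elim \<omega>)
    then show ?case
      using tube_within_reach proj_onto_within_reach[OF manifold(1,2,4)]
      unfolding shared_nearest_point_pairs_def by fastforce
  qed
qed
end
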